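(* Let $\sigma>0$, $\eta>0$, $\hat\alpha>0$, $h>0$, $r\ge0$, $a\in\mathbb{R}$, and for $\beta\ge0$ let $v_\beta$ denote the unique $C^1[0,\infty)$ solution of $\frac{\sigma^2}2v'(y)=\beta+\frac{\hat\alpha}4v(y)^2+\eta y(v(y)-\frac h\eta)-av(y)$, $y\ge0$, $v(0)=-r$. If $0\le\beta_1<\beta_2$, then $v_{\beta_1}(x)<v_{\beta_2}(x)$ for all $x>0$. *)

theory Defs
  imports "HOL-Analysis.Analysis"
begin

definition is_v_sol ::
  "real \<Rightarrow> real \<Rightarrow> real \<Rightarrow> real \<Rightarrow> real \<Rightarrow> real \<Rightarrow> real \<Rightarrow> (real \<Rightarrow> real) \<Rightarrow> bool" where
  "is_v_sol \<sigma> \<eta> \<alpha> h r a \<beta> v \<longleftrightarrow>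
     (\<exists>v'. continuous_on {0..} v' \<and>
        (\<forall>y\<ge>0. (v has_real_derivative v' y) (at y within {0..}) \<and>
            \<sigma>^2 / 2 * v' y = \<beta> + \<alpha> / 4 * (v y)^2 + \<eta> * y * (v y - h / \<eta>) - a * v y)) \<and>
     v 0 = - r"

end

theory Submission
  imports Defs
begin

text \<open>The difference w = v2 - v1 vanishes at 0, and wherever it vanishes the two equations
  differ only in \<beta>, so (\<sigma>^2/2) w' = \<beta>2 - \<beta>1 > 0 there. A differentiable function that starts
  at 0 and can only cross 0 upwards stays positive: just after 0 it is positive, and at a first
  return to 0 it would have to be negative immediately to the left.\<close>

lemma first_zero_between:
  fixes w :: "real \<Rightarrow> real"
  assumes "c \<le> x" and cont: "continuous_on {c..x} w" and "w c > 0" and "w x \<le> 0"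
  obtains z where "c < z" "z \<le> x" "w z = 0" "\<forall>y\<in>{c..<z}. w y > 0"
proof -
  define S where "S = {c..x} \<inter> w -` {..0}"
  have "closed S"
    unfolding S_def by (rule continuous_closed_preimage[OF cont]) auto
  moreover have "x \<in> S" "bdd_below S"
    using assms unfolding S_def by (auto intro: bdd_belowI[of _ c])
  ultimately have zS: "Inf S \<in> S" and least: "\<And>y. y \<in> S \<Longrightarrow> Inf S \<le> y"
    using closed_contains_Inf cInf_lower by blast+
  define z where "z = Inf S"
  have below: "\<forall>y\<in>{c..<z}. w y > 0"
    using least zS unfolding S_def z_def by (force simp: not_less)
  have "c \<le> z" "z \<le> x" "w z \<le> 0"
    using zS unfolding S_def z_def by auto
  then have "c < z"
    using \<open>w c > 0\<close> by (auto simp: order.order_iff_strict)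
  moreover have "w z = 0"
  proof -
    obtain z' where "c \<le> z'" "z' \<le> z" "w z' = 0"
      using IVT2'[of w z 0 c] \<open>w z \<le> 0\<close> \<open>w c > 0\<close> \<open>c < z\<close> \<open>z \<le> x\<close>
        continuous_on_subset[OF cont, of "{c..z}"] by force
    with below show ?thesis by (metis atLeastLessThan_iff less_irrefl order_le_less)
  qed
  ultimately show thesis using below that \<open>z \<le> x\<close> by blast
qed

lemma positive_if_zeros_cross_upwards:
  fixes w w' :: "real \<Rightarrow> real"
  assumes deriv: "\<And>y. y \<ge> a \<Longrightarrow> (w has_real_derivative w' y) (at y within {a..})"
    and start: "w a = 0"
    and upward: "\<And>y. y \<ge> a \<Longrightarrow> w y = 0 \<Longrightarrow> w' y > 0"
    and "x > a"
  shows "w x > 0"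
proof (rule ccontr)
  assume "\<not> w x > 0"
  have cont: "continuous_on {a..} w"
    using deriv by (auto intro: DERIV_continuous_on)
  obtain \<delta> where "\<delta> > 0" and "\<forall>k>0. a + k \<in> {a..} \<longrightarrow> k < \<delta> \<longrightarrow> w a < w (a + k)"
    using has_real_derivative_pos_inc_right[OF deriv upward] start by auto
  then have near_start: "w y > 0" if "a < y" "y < a + \<delta>" for y
    using that start by (metis add.commute atLeast_iff diff_add_cancel diff_gt_0_iff_gt
        diff_less_eq less_eq_real_def)
  define c where "c = a + \<delta> / 2"
  have "c < x" "w c > 0"
    using near_start[of x] near_start[of c] \<open>\<not> w x > 0\<close> \<open>\<delta> > 0\<close> \<open>x > a\<close>
    unfolding c_def by force+
  moreover have "continuous_on {c..x} w"
    using continuous_on_subset[OF cont] \<open>\<delta> > 0\<close> unfolding c_def by auto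
  ultimately obtain z where "c < z" "w z = 0" and positive: "\<forall>y\<in>{c..<z}. w y > 0"
    using first_zero_between[of c x w] \<open>\<not> w x > 0\<close> by auto
  have "z \<ge> a"
    using \<open>c < z\<close> \<open>\<delta> > 0\<close> unfolding c_def by simp
  then obtain e where "e > 0" and drop: "\<forall>k>0. z - k \<in> {a..} \<longrightarrow> k < e \<longrightarrow> w (z - k) < w z"
    using has_real_derivative_pos_inc_left[OF deriv upward] \<open>w z = 0\<close> by blast
  define k where "k = min e (z - c) / 2"
  have "0 < k" "k < e" "z - k \<in> {c..<z}"
    using \<open>e > 0\<close> \<open>c < z\<close> unfolding k_def by (auto simp: min_def field_simps)
  moreover have "c \<ge> a"
    using \<open>\<delta> > 0\<close> unfolding c_def by simp
  ultimately have "w (z - k) < 0" "z - k \<in> {c..<z}"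
    using drop \<open>w z = 0\<close> by auto
  with positive show False by fastforce
qed

theorem lemma16:
  fixes \<sigma> \<eta> \<alpha> h r a \<beta>1 \<beta>2 :: real and v1 v2 :: "real \<Rightarrow> real"
  assumes "\<sigma> > 0" "\<eta> > 0" "\<alpha> > 0" "h > 0" "r \<ge> 0"
    and "0 \<le> \<beta>1" "\<beta>1 < \<beta>2"
    and "is_v_sol \<sigma> \<eta> \<alpha> h r a \<beta>1 v1"
    and "is_v_sol \<sigma> \<eta> \<alpha> h r a \<beta>2 v2"
  shows "\<forall>x>0. v1 x < v2 x"
proof -
  obtain d1 where d1: "\<forall>y\<ge>0. (v1 has_real_derivative d1 y) (at y within {0..}) \<and>
            \<sigma>^2 / 2 * d1 y = \<beta>1 + \<alpha> / 4 * (v1 y)^2 + \<eta> * y * (v1 y - h / \<eta>) - a * v1 y"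
    and "v1 0 = - r" using assms(8) unfolding is_v_sol_def by blast
  obtain d2 where d2: "\<forall>y\<ge>0. (v2 has_real_derivative d2 y) (at y within {0..}) \<and>
            \<sigma>^2 / 2 * d2 y = \<beta>2 + \<alpha> / 4 * (v2 y)^2 + \<eta> * y * (v2 y - h / \<eta>) - a * v2 y"
    and "v2 0 = - r" using assms(9) unfolding is_v_sol_def by blast
  have deriv: "((\<lambda>y. v2 y - v1 y) has_real_derivative d2 y - d1 y) (at y within {0..})"
    if "y \<ge> 0" for y
    using d1 d2 that by (auto intro!: derivative_eq_intros)
  have upward: "d2 y - d1 y > 0" if "y \<ge> 0" "v2 y - v1 y = 0" for y
  proof -
    have "\<sigma>^2 / 2 * d1 y = \<beta>1 + \<alpha> / 4 * (v1 y)^2 + \<eta> * y * (v1 y - h / \<eta>) - a * v1 y"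
      "\<sigma>^2 / 2 * d2 y = \<beta>2 + \<alpha> / 4 * (v1 y)^2 + \<eta> * y * (v1 y - h / \<eta>) - a * v1 y"
      using d1 d2 that by auto
    then have "\<sigma>^2 / 2 * (d2 y - d1 y) = \<beta>2 - \<beta>1"
      by (simp only: right_diff_distrib)
    then show ?thesis
      using \<open>\<sigma> > 0\<close> \<open>\<beta>1 < \<beta>2\<close> by (metis diff_gt_0_iff_gt zero_less_mult_pos zero_less_divide_iff
          zero_less_power zero_less_numeral)
  qed
  show ?thesis
    using positive_if_zeros_cross_upwards[of 0, OF deriv _ upward] \<open>v1 0 = - r\<close> \<open>v2 0 = - r\<close>
    by simp
qed

end
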